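(* Let $\Bbbk$ be a field of characteristic $\neq 2$ and let $A_1,\dots,A_m\in\Bbbk^{n\times n}$ be symmetric matrices. There exists $P\in\mathrm{GL}_n(\Bbbk)$ such that $P^TA_iP$ is diagonal for every $1\le i\le m$ if and only if $Z(A_1,\dots,A_m)$ contains $n$ nonzero matrices $\epsilon_1,\dots,\epsilon_n$ with $\epsilon_j^2=\epsilon_j$, $\epsilon_j\epsilon_l=0$ for $j\ne l$, and $\epsilon_1+\cdots+\epsilon_n=I_n$.
   Context: The center of symmetric matrices $A_1,\dots,A_m\in\Bbbk^{n\times n}$ is $Z(A_1,\dots,A_m)=\{X\in\Bbbk^{n\times n} : (A_iX)^T=A_iX \text{ for all } 1\le i\le m\}$. *)

theory Defs
  imports "Jordan_Normal_Form.Matrix"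
begin

definition center_mat :: "nat \<Rightarrow> nat \<Rightarrow> (nat \<Rightarrow> 'a::comm_ring_1 mat) \<Rightarrow> 'a mat set" where
  "center_mat n m A = {X \<in> carrier_mat n n. \<forall>i<m. transpose_mat (A i * X) = A i * X}"

end

theory Submission
  imports Defs "Jordan_Normal_Form.Determinant"
begin

text \<open>
  Write \<open>E\<^sub>j\<close> for the diagonal matrix units. If \<open>P\<^sup>T A\<^sub>i P = D\<^sub>i\<close> are diagonal, the
  idempotents \<open>\<epsilon>\<^sub>j = P E\<^sub>j P\<^sup>-\<^sup>1\<close> work: \<open>A\<^sub>i \<epsilon>\<^sub>j = P\<^sup>-\<^sup>T (D\<^sub>i E\<^sub>j) P\<^sup>-\<^sup>1\<close>
  is symmetric because a diagonal matrix commutes with every \<open>E\<^sub>j\<close>. Conversely, a nonzero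
  column \<open>v\<^sub>j\<close> of \<open>\<epsilon>\<^sub>j\<close> satisfies \<open>\<epsilon>\<^sub>l v\<^sub>j = \<delta>\<^sub>l\<^sub>j v\<^sub>j\<close>, so the matrix \<open>P\<close> with
  columns \<open>v\<^sub>j\<close> satisfies \<open>\<epsilon>\<^sub>j P = P E\<^sub>j\<close> and is invertible. Symmetry of \<open>A\<^sub>i \<epsilon>\<^sub>j\<close>
  then makes \<open>P\<^sup>T A\<^sub>i P\<close> commute with every \<open>E\<^sub>j\<close>, i.e. it is diagonal.
\<close>

definition diag_unit_mat :: "nat \<Rightarrow> nat \<Rightarrow> 'a::semiring_1 mat" where
  "diag_unit_mat n j = mat n n (\<lambda>(a, b). if a = j \<and> b = j then 1 else 0)"

lemma diag_unit_mat_carrier [simp]: "diag_unit_mat n j \<in> carrier_mat n n"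
  and dim_diag_unit_mat [simp]: "dim_row (diag_unit_mat n j) = n" "dim_col (diag_unit_mat n j) = n"
  and index_diag_unit_mat [simp]:
    "a < n \<Longrightarrow> b < n \<Longrightarrow> diag_unit_mat n j $$ (a, b) = (if a = j \<and> b = j then 1 else 0)"
  by (simp_all add: diag_unit_mat_def)

lemma transpose_diag_unit_mat [simp]: "transpose_mat (diag_unit_mat n j) = diag_unit_mat n j"
  by (rule eq_matI) auto

lemma diag_unit_mat_nonzero: "j < n \<Longrightarrow> diag_unit_mat n j \<noteq> (0\<^sub>m n n :: 'a::semiring_1 mat)"
  by (metis index_diag_unit_mat index_zero_mat(1) zero_neq_one)

lemma mult_diag_unit_mat_index:
  fixes X :: "'a::semiring_1 mat"
  assumes "X \<in> carrier_mat nr n" "j < n" "a < nr" "b < n"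
  shows "(X * diag_unit_mat n j) $$ (a, b) = (if b = j then X $$ (a, j) else 0)"
  using assms by (simp add: scalar_prod_def if_distrib[of "(*) _"] cong: if_cong)

lemma diag_unit_mat_mult_index:
  fixes X :: "'a::semiring_1 mat"
  assumes "X \<in> carrier_mat n nc" "j < n" "a < n" "b < nc"
  shows "(diag_unit_mat n j * X) $$ (a, b) = (if a = j then X $$ (j, b) else 0)"
  using assms by (simp add: scalar_prod_def if_distrib[of "\<lambda>x. x * _"] cong: if_cong)

lemma mult_diag_unit_mat_mult_vec:
  fixes X :: "'a::comm_semiring_1 mat"
  assumes X: "X \<in> carrier_mat nr n" and j: "j < n" and c: "c \<in> carrier_vec n"
  shows "(X * diag_unit_mat n j) *\<^sub>v c = c $ j \<cdot>\<^sub>v col X j"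
proof (rule eq_vecI)
  fix a assume "a < dim_vec (c $ j \<cdot>\<^sub>v col X j)"
  then have a: "a < nr" using X by simp
  have "((X * diag_unit_mat n j) *\<^sub>v c) $ a = (\<Sum>k\<in>{0..<n}. (X * diag_unit_mat n j) $$ (a, k) * c $ k)"
    using X c a by (simp add: scalar_prod_def)
  also have "\<dots> = (\<Sum>k\<in>{0..<n}. if k = j then X $$ (a, j) * c $ j else 0)"
    using X j a by (intro sum.cong) (auto simp: mult_diag_unit_mat_index simp del: index_mult_mat(1))
  finally show "((X * diag_unit_mat n j) *\<^sub>v c) $ a = (c $ j \<cdot>\<^sub>v col X j) $ a"
    using X j a by (simp add: mult.commute)
qed (use X in simp)

lemma diag_unit_mat_mult_diag_unit_mat:
  assumes "j < n" "l < n"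
  shows "diag_unit_mat n j * diag_unit_mat n l = (if j = l then diag_unit_mat n j else (0\<^sub>m n n :: 'a::semiring_1 mat))"
  by (rule eq_matI)
    (use assms in \<open>auto simp: mult_diag_unit_mat_index[OF diag_unit_mat_carrier]
      simp del: index_mult_mat(1)\<close>)

lemma diagonal_mat_iff_commute_diag_unit_mat:
  fixes D :: "'a::semiring_1 mat"
  assumes "D \<in> carrier_mat n n"
  shows "diagonal_mat D \<longleftrightarrow> (\<forall>j<n. D * diag_unit_mat n j = diag_unit_mat n j * D)"
proof
  assume "diagonal_mat D"
  then show "\<forall>j<n. D * diag_unit_mat n j = diag_unit_mat n j * D"
    using assms
    by (auto simp: diagonal_mat_def mult_diag_unit_mat_index diag_unit_mat_mult_index
        simp del: index_mult_mat(1) intro!: eq_matI)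
next
  assume comm: "\<forall>j<n. D * diag_unit_mat n j = diag_unit_mat n j * D"
  show "diagonal_mat D"
    unfolding diagonal_mat_def
  proof (intro allI impI)
    fix a b assume "a < dim_row D" "b < dim_col D" "a \<noteq> b"
    then show "D $$ (a, b) = 0"
      using assms arg_cong[OF comm[rule_format, of b], of "\<lambda>X. X $$ (a, b)"]
      by (simp add: mult_diag_unit_mat_index diag_unit_mat_mult_index del: index_mult_mat(1))
  qed
qed

lemma foldr_add_mat_carrier:
  "\<forall>x\<in>set xs. f x \<in> carrier_mat nr nc \<Longrightarrow> foldr (+) (map f xs) (0\<^sub>m nr nc) \<in> carrier_mat nr nc"
  by (induction xs) auto

lemma index_foldr_add_mat:
  assumes "\<forall>x\<in>set xs. f x \<in> carrier_mat nr nc" "a < nr" "b < nc"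
  shows "foldr (+) (map f xs) (0\<^sub>m nr nc) $$ (a, b) = (\<Sum>x\<leftarrow>xs. f x $$ (a, b))"
  using assms
proof (induction xs)
  case (Cons x xs)
  then have "foldr (+) (map f xs) (0\<^sub>m nr nc) \<in> carrier_mat nr nc"
    by (simp add: foldr_add_mat_carrier)
  with Cons show ?case by simp
qed simp

lemma mult_foldr_add_mat:
  fixes P Q :: "'a::semiring_1 mat"
  assumes P: "P \<in> carrier_mat nr n" and Q: "Q \<in> carrier_mat n nc"
    and f: "\<forall>x\<in>set xs. f x \<in> carrier_mat n n"
  shows "P * foldr (+) (map f xs) (0\<^sub>m n n) * Q = foldr (+) (map (\<lambda>x. P * f x * Q) xs) (0\<^sub>m nr nc)"
  using f
proof (induction xs)
  case Nil
  show ?case using P Q by simp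
next
  case (Cons x xs)
  then have fx: "f x \<in> carrier_mat n n" and rest: "foldr (+) (map f xs) (0\<^sub>m n n) \<in> carrier_mat n n"
    by (auto simp: foldr_add_mat_carrier)
  have "P * (f x + foldr (+) (map f xs) (0\<^sub>m n n)) * Q
      = P * f x * Q + P * foldr (+) (map f xs) (0\<^sub>m n n) * Q"
    using P Q fx rest by (simp add: mult_add_distrib_mat add_mult_distrib_mat[of _ nr n])
  then show ?case using Cons by simp
qed

lemma sum_diag_unit_mat: "foldr (+) (map (diag_unit_mat n) [0..<n]) (0\<^sub>m n n) = (1\<^sub>m n :: 'a::semiring_1 mat)"
proof (rule eq_matI)
  fix a b assume "a < dim_row (1\<^sub>m n :: 'a mat)" "b < dim_col (1\<^sub>m n :: 'a mat)"
  then have ab: "a < n" "b < n" by auto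
  have "foldr (+) (map (diag_unit_mat n) [0..<n]) (0\<^sub>m n n) $$ (a, b)
      = (\<Sum>j\<in>{0..<n}. if a = j \<and> b = j then 1 else 0)"
    using ab by (simp add: index_foldr_add_mat interv_sum_list_conv_sum_set_nat)
  also have "\<dots> = 1\<^sub>m n $$ (a, b)"
    using ab by (cases "a = b") (auto intro: sum.neutral)
  finally show "foldr (+) (map (diag_unit_mat n) [0..<n]) (0\<^sub>m n n) $$ (a, b) = 1\<^sub>m n $$ (a, b)" .
qed (use foldr_add_mat_carrier[of "[0..<n]" "diag_unit_mat n" n n] in auto)

lemma transpose_congruence:
  fixes Q S :: "'a::comm_semiring_1 mat"
  assumes Q: "Q \<in> carrier_mat n k" and S: "S \<in> carrier_mat n n" and sym: "transpose_mat S = S"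
  shows "transpose_mat (transpose_mat Q * S * Q) = transpose_mat Q * S * Q"
proof -
  have "transpose_mat (transpose_mat Q * (S * Q)) = transpose_mat (S * Q) * Q"
    using Q S by (simp add: transpose_mult[of "transpose_mat Q" k n "S * Q" k])
  also have "transpose_mat (S * Q) = transpose_mat Q * S"
    using Q S sym by (simp add: transpose_mult[of S n n Q k])
  finally show ?thesis
    using Q S by simp
qed

lemma invertible_mat_if_trivial_kernel:
  fixes P :: "'a::field mat"
  assumes P: "P \<in> carrier_mat n n"
    and ker: "\<And>c. c \<in> carrier_vec n \<Longrightarrow> P *\<^sub>v c = 0\<^sub>v n \<Longrightarrow> c = 0\<^sub>v n"
  shows "invertible_mat P"
proof -
  have "det P \<noteq> 0"
    using ker by (auto simp: det_0_iff_vec_prod_zero_field[OF P])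
  then have "P \<in> Units (ring_mat TYPE('a) n ())"
    by (rule det_non_zero_imp_unit[OF P])
  then obtain B where "B \<in> carrier_mat n n" "P * B = 1\<^sub>m n" "B * P = 1\<^sub>m n"
    unfolding Units_def ring_mat_def by auto
  then show ?thesis
    using P by (auto simp: invertible_mat_def inverts_mat_def)
qed

lemma invertible_matE:
  assumes "invertible_mat P" "P \<in> carrier_mat n n"
  obtains Q where "Q \<in> carrier_mat n n" "P * Q = 1\<^sub>m n" "Q * P = 1\<^sub>m n"
proof -
  obtain Q where PQ: "P * Q = 1\<^sub>m (dim_row P)" and QP: "Q * P = 1\<^sub>m (dim_row Q)"
    using assms(1) by (auto simp: invertible_mat_def inverts_mat_def)
  have "Q \<in> carrier_mat n n"
    using arg_cong[OF PQ, of dim_col] arg_cong[OF QP, of dim_col] assms(2) by auto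
  with that show ?thesis
    using PQ QP assms(2) by auto
qed

lemma nonzero_mat_has_nonzero_col:
  assumes "X \<in> carrier_mat nr nc" "X \<noteq> 0\<^sub>m nr nc"
  obtains k where "k < nc" "col X k \<noteq> 0\<^sub>v nr"
proof -
  have "\<exists>k<nc. col X k \<noteq> 0\<^sub>v nr"
  proof (rule ccontr)
    assume "\<not> ?thesis"
    then have "X $$ (i, j) = 0" if "i < nr" "j < nc" for i j
      using assms(1) that by (metis carrier_matD(1) col_def index_vec index_zero_vec(1))
    then have "X = 0\<^sub>m nr nc"
      using assms(1) by (intro eq_matI) auto
    with assms(2) show False ..
  qed
  with that show ?thesis by blast
qed

lemma congruence_commute_if_intertwined:
  fixes A P \<epsilon> E :: "'a::comm_ring_1 mat"
  assumes carrier: "A \<in> carrier_mat n n" "P \<in> carrier_mat n n"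
      "\<epsilon> \<in> carrier_mat n n" "E \<in> carrier_mat n n"
    and sym: "transpose_mat A = A" "transpose_mat E = E"
    and central: "transpose_mat (A * \<epsilon>) = A * \<epsilon>"
    and intertwine: "\<epsilon> * P = P * E"
  shows "transpose_mat P * A * P * E = E * (transpose_mat P * A * P)"
proof -
  have Pt: "transpose_mat P \<in> carrier_mat n n" using carrier by simp
  have "transpose_mat P * A * P * E = transpose_mat P * (A * (\<epsilon> * P))"
    using carrier Pt by (simp add: assoc_mult_mat[of "transpose_mat P" n n "A * P" n E n] intertwine)
  also have "\<dots> = transpose_mat P * (transpose_mat (A * \<epsilon>) * P)"
    using carrier by (simp add: central)
  also have "\<dots> = transpose_mat (\<epsilon> * P) * (A * P)"
    using carrier Pt
    by (simp add: assoc_mult_mat[of "transpose_mat P" n n "transpose_mat \<epsilon>" n "A * P" n]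
        transpose_mult[of A n n \<epsilon> n] transpose_mult[of \<epsilon> n n P n] sym)
  also have "\<dots> = E * (transpose_mat P * A * P)"
    using carrier Pt
    by (simp add: assoc_mult_mat[of E n n "transpose_mat P" n "A * P" n] intertwine
        transpose_mult[of P n n E n] sym)
  finally show ?thesis .
qed

lemma similar_mult_similar:
  fixes P Q X Y :: "'a::semiring_1 mat"
  assumes carrier: "P \<in> carrier_mat n n" "Q \<in> carrier_mat n n"
      "X \<in> carrier_mat n n" "Y \<in> carrier_mat n n"
    and QP: "Q * P = 1\<^sub>m n"
  shows "P * X * Q * (P * Y * Q) = P * (X * Y) * Q"
proof -
  have "Q * (P * (Y * Q)) = Y * Q"
    using carrier by (simp add: assoc_mult_mat[of Q n n P n "Y * Q" n, symmetric] QP)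
  then show ?thesis
    using carrier by (simp add: assoc_mult_mat[of _ n n _ n _ n])
qed

lemma similar_eq_zero_iff:
  fixes P Q X :: "'a::semiring_1 mat"
  assumes carrier: "P \<in> carrier_mat n n" "Q \<in> carrier_mat n n" "X \<in> carrier_mat n n"
    and QP: "Q * P = 1\<^sub>m n"
  shows "P * X * Q = 0\<^sub>m n n \<longleftrightarrow> X = 0\<^sub>m n n"
proof
  assume zero: "P * X * Q = 0\<^sub>m n n"
  have "X = Q * (P * X * Q) * P"
    using carrier
    by (simp add: assoc_mult_mat[of _ n n _ n _ n] assoc_mult_mat[of Q n n P n _ n, symmetric] QP)
  also have "\<dots> = 0\<^sub>m n n"
    using carrier by (simp add: zero)
  finally show "X = 0\<^sub>m n n" .
qed (use carrier in simp)

lemma mult_similar_eq_congruence: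
  fixes A P Q X :: "'a::comm_semiring_1 mat"
  assumes carrier: "A \<in> carrier_mat n n" "P \<in> carrier_mat n n"
      "Q \<in> carrier_mat n n" "X \<in> carrier_mat n n"
    and PQ: "P * Q = 1\<^sub>m n"
  shows "A * (P * X * Q) = transpose_mat Q * (transpose_mat P * A * P * X) * Q"
proof -
  have "transpose_mat Q * transpose_mat P = 1\<^sub>m n"
    using carrier by (simp add: transpose_mult[of P n n Q n, symmetric] PQ)
  then show ?thesis
    using carrier
    by (simp add: assoc_mult_mat[of _ n n _ n _ n]
        assoc_mult_mat[of "transpose_mat Q" n n "transpose_mat P" n _ n, symmetric])
qed

lemma central_idempotents_if_congruence_diagonal:
  fixes A :: "nat \<Rightarrow> 'a::comm_ring_1 mat"
  assumes dims: "\<forall>i<m. A i \<in> carrier_mat n n"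
    and sym: "\<forall>i<m. transpose_mat (A i) = A i"
    and P: "P \<in> carrier_mat n n" and inv: "invertible_mat P"
    and diag: "\<forall>i<m. diagonal_mat (transpose_mat P * A i * P)"
  shows "\<exists>\<epsilon> :: nat \<Rightarrow> 'a mat.
            (\<forall>j<n. \<epsilon> j \<in> center_mat n m A \<and> \<epsilon> j \<noteq> 0\<^sub>m n n \<and> \<epsilon> j * \<epsilon> j = \<epsilon> j) \<and>
            (\<forall>j<n. \<forall>l<n. j \<noteq> l \<longrightarrow> \<epsilon> j * \<epsilon> l = 0\<^sub>m n n) \<and>
            foldr (+) (map \<epsilon> [0..<n]) (0\<^sub>m n n) = 1\<^sub>m n"
proof -
  obtain Q where Q: "Q \<in> carrier_mat n n" and PQ: "P * Q = 1\<^sub>m n" and QP: "Q * P = 1\<^sub>m n"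
    using invertible_matE[OF inv P] .
  define \<epsilon> where "\<epsilon> j = P * diag_unit_mat n j * Q" for j
  have \<epsilon>_carrier: "\<epsilon> j \<in> carrier_mat n n" for j
    unfolding \<epsilon>_def using P Q diag_unit_mat_carrier by (meson mult_carrier_mat)
  have \<epsilon>_mult: "\<epsilon> j * \<epsilon> l = (if j = l then \<epsilon> j else 0\<^sub>m n n)" if "j < n" "l < n" for j l
    using similar_mult_similar[OF P Q diag_unit_mat_carrier diag_unit_mat_carrier QP, of j l] P Q that
    by (simp add: \<epsilon>_def diag_unit_mat_mult_diag_unit_mat)
  have \<epsilon>_nonzero: "\<epsilon> j \<noteq> 0\<^sub>m n n" if "j < n" for j
    using similar_eq_zero_iff[OF P Q diag_unit_mat_carrier QP] diag_unit_mat_nonzero[OF that]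
    by (simp add: \<epsilon>_def)
  have \<epsilon>_sum: "foldr (+) (map \<epsilon> [0..<n]) (0\<^sub>m n n) = 1\<^sub>m n"
    using mult_foldr_add_mat[OF P Q, of "[0..<n]" "diag_unit_mat n"] P PQ
    by (simp add: sum_diag_unit_mat \<epsilon>_def[abs_def])
  have \<epsilon>_central: "transpose_mat (A i * \<epsilon> j) = A i * \<epsilon> j" if i: "i < m" and j: "j < n" for i j
  proof -
    define D where "D = transpose_mat P * A i * P"
    have Ai: "A i \<in> carrier_mat n n" using dims i by simp
    have D: "D \<in> carrier_mat n n" using Ai P by (simp add: D_def)
    have "transpose_mat D = D"
      unfolding D_def using transpose_congruence[OF P Ai] sym i by simp
    moreover have "D * diag_unit_mat n j = diag_unit_mat n j * D"
      using diag i j diagonal_mat_iff_commute_diag_unit_mat[OF D] by (simp add: D_def)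
    ultimately have DE_sym: "transpose_mat (D * diag_unit_mat n j) = D * diag_unit_mat n j"
      using D by (simp add: transpose_mult[of "diag_unit_mat n j" n n D n])
    then show ?thesis
      using transpose_congruence[OF Q _ DE_sym] mult_similar_eq_congruence[OF Ai P Q diag_unit_mat_carrier PQ] D
      by (simp add: \<epsilon>_def D_def)
  qed
  show ?thesis
    using \<epsilon>_carrier \<epsilon>_central \<epsilon>_nonzero \<epsilon>_mult \<epsilon>_sum
    by (intro exI[of _ \<epsilon>]) (auto simp: center_mat_def)
qed

lemma intertwining_mat_of_orthogonal_idempotents:
  fixes \<epsilon> :: "nat \<Rightarrow> 'a::comm_ring_1 mat"
  assumes idem: "\<forall>j<n. \<epsilon> j \<in> carrier_mat n n \<and> \<epsilon> j \<noteq> 0\<^sub>m n n \<and> \<epsilon> j * \<epsilon> j = \<epsilon> j"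
    and orth: "\<forall>j<n. \<forall>l<n. j \<noteq> l \<longrightarrow> \<epsilon> j * \<epsilon> l = 0\<^sub>m n n"
  obtains P where "P \<in> carrier_mat n n" "\<forall>j<n. col P j \<noteq> 0\<^sub>v n"
    "\<forall>j<n. \<epsilon> j * P = P * diag_unit_mat n j"
proof -
  have \<epsilon>: "\<epsilon> j \<in> carrier_mat n n" if "j < n" for j
    using idem that by simp
  have nonzero_col: "\<exists>k. k < n \<and> col (\<epsilon> j) k \<noteq> 0\<^sub>v n" if "j < n" for j
    using idem that nonzero_mat_has_nonzero_col[OF \<epsilon>[OF that]] by blast
  define k where "k j = (SOME k. k < n \<and> col (\<epsilon> j) k \<noteq> 0\<^sub>v n)" for j
  have k: "k j < n \<and> col (\<epsilon> j) (k j) \<noteq> 0\<^sub>v n" if "j < n" for j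
    unfolding k_def using someI_ex[OF nonzero_col[OF that]] .
  define v where "v j = col (\<epsilon> j) (k j)" for j
  have v: "v j \<in> carrier_vec n" if "j < n" for j
    using col_dim[of "\<epsilon> j" "k j"] \<epsilon>[OF that] by (simp add: v_def)
  have \<epsilon>_v: "\<epsilon> j *\<^sub>v v l = (if j = l then v l else 0\<^sub>v n)" if "j < n" "l < n" for j l
  proof -
    have "\<epsilon> j *\<^sub>v v l = col (\<epsilon> j * \<epsilon> l) (k l)"
      using col_mult2[OF \<epsilon>[OF that(1)] \<epsilon>[OF that(2)] conjunct1[OF k[OF that(2)]]] by (simp add: v_def)
    then show ?thesis
      using idem orth that k by (auto simp: v_def)
  qed
  define P where "P = mat n n (\<lambda>(a, l). v l $ a)"
  have P: "P \<in> carrier_mat n n"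
    by (simp add: P_def)
  have col_P: "col P l = v l" if "l < n" for l
    using v[OF that] that by (intro eq_vecI) (auto simp: P_def)
  have "\<epsilon> j * P = P * diag_unit_mat n j" if j: "j < n" for j
  proof (rule eq_matI)
    fix a l assume "a < dim_row (P * diag_unit_mat n j)" "l < dim_col (P * diag_unit_mat n j)"
    then have a: "a < n" and l: "l < n" using P by auto
    have "(\<epsilon> j * P) $$ (a, l) = (\<epsilon> j *\<^sub>v v l) $ a"
      using \<epsilon>[OF j] P a l col_P[OF l] by simp
    also have "\<dots> = (if l = j then v j $ a else 0)"
      using \<epsilon>_v[OF j l] a by auto
    also have "\<dots> = (P * diag_unit_mat n j) $$ (a, l)"
      by (subst mult_diag_unit_mat_index[OF P j a l]) (simp add: P_def a j)
    finally show "(\<epsilon> j * P) $$ (a, l) = (P * diag_unit_mat n j) $$ (a, l)" .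
  qed (use \<epsilon>[OF j] P in auto)
  moreover have "col P j \<noteq> 0\<^sub>v n" if "j < n" for j
    using col_P k that by (simp add: v_def)
  ultimately show ?thesis
    using that P by blast
qed

lemma invertible_mat_if_intertwining:
  fixes P :: "'a::field mat" and \<epsilon> :: "nat \<Rightarrow> 'a mat"
  assumes P: "P \<in> carrier_mat n n" and cols: "\<forall>j<n. col P j \<noteq> 0\<^sub>v n"
    and intertwine: "\<forall>j<n. \<epsilon> j \<in> carrier_mat n n \<and> \<epsilon> j * P = P * diag_unit_mat n j"
  shows "invertible_mat P"
proof (rule invertible_mat_if_trivial_kernel[OF P])
  fix c :: "'a vec" assume c: "c \<in> carrier_vec n" and Pc: "P *\<^sub>v c = 0\<^sub>v n"
  have "c $ j = 0" if j: "j < n" for j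
  proof -
    have \<epsilon>: "\<epsilon> j \<in> carrier_mat n n" using intertwine j by simp
    have "c $ j \<cdot>\<^sub>v col P j = (\<epsilon> j * P) *\<^sub>v c"
      using mult_diag_unit_mat_mult_vec[OF P j c] intertwine j by simp
    also have "\<dots> = \<epsilon> j *\<^sub>v 0\<^sub>v n"
      using \<epsilon> P c Pc by (simp add: assoc_mult_mat_vec[of _ n n _ n])
    also have "\<dots> = 0\<^sub>v n"
      using \<epsilon> by (intro eq_vecI) auto
    finally have scaled_zero: "c $ j \<cdot>\<^sub>v col P j = 0\<^sub>v n" .
    have "\<exists>a<n. col P j $ a \<noteq> 0"
    proof (rule ccontr)
      assume "\<not> ?thesis"
      then have "col P j = 0\<^sub>v n"
        using P by (intro eq_vecI) auto
      with cols j show False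
        by simp
    qed
    then obtain a where a: "a < n" "col P j $ a \<noteq> 0"
      by blast
    have "c $ j * col P j $ a = 0"
      using arg_cong[OF scaled_zero, of "\<lambda>w. w $ a"] a P by simp
    with a show ?thesis
      by simp
  qed
  then show "c = 0\<^sub>v n"
    using c by (intro eq_vecI) auto
qed

lemma congruence_diagonal_if_central_idempotents:
  fixes A :: "nat \<Rightarrow> 'a::field mat"
  assumes dims: "\<forall>i<m. A i \<in> carrier_mat n n"
    and sym: "\<forall>i<m. transpose_mat (A i) = A i"
    and idem: "\<forall>j<n. \<epsilon> j \<in> center_mat n m A \<and> \<epsilon> j \<noteq> 0\<^sub>m n n \<and> \<epsilon> j * \<epsilon> j = \<epsilon> j"
    and orth: "\<forall>j<n. \<forall>l<n. j \<noteq> l \<longrightarrow> \<epsilon> j * \<epsilon> l = 0\<^sub>m n n"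
  shows "\<exists>P \<in> carrier_mat n n. invertible_mat P \<and> (\<forall>i<m. diagonal_mat (transpose_mat P * A i * P))"
proof -
  have \<epsilon>: "\<epsilon> j \<in> carrier_mat n n"
    and \<epsilon>_central: "\<forall>i<m. transpose_mat (A i * \<epsilon> j) = A i * \<epsilon> j"
    if "j < n" for j
    using idem that by (auto simp: center_mat_def)
  obtain P where P: "P \<in> carrier_mat n n" and cols: "\<forall>j<n. col P j \<noteq> 0\<^sub>v n"
    and intertwine: "\<forall>j<n. \<epsilon> j * P = P * diag_unit_mat n j"
    using intertwining_mat_of_orthogonal_idempotents[of n \<epsilon>] idem orth \<epsilon> by blast
  have "invertible_mat P"
    using invertible_mat_if_intertwining[OF P cols] \<epsilon> intertwine by blast
  moreover have "diagonal_mat (transpose_mat P * A i * P)" if i: "i < m" for i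
  proof -
    have Ai: "A i \<in> carrier_mat n n" using dims i by simp
    have D: "transpose_mat P * A i * P \<in> carrier_mat n n"
      using Ai P by (intro mult_carrier_mat) auto
    show ?thesis
      unfolding diagonal_mat_iff_commute_diag_unit_mat[OF D]
      using congruence_commute_if_intertwined[OF Ai P \<epsilon> diag_unit_mat_carrier] sym i \<epsilon>_central intertwine
      by simp
  qed
  ultimately show ?thesis
    using P by blast
qed

theorem mainTheorem3:
  fixes n m :: nat and A :: "nat \<Rightarrow> 'a::field mat"
  assumes char: "(2::'a) \<noteq> 0"
    and dims: "\<forall>i<m. A i \<in> carrier_mat n n"
    and sym: "\<forall>i<m. transpose_mat (A i) = A i"
  shows "(\<exists>P \<in> carrier_mat n n. invertible_mat P \<and>
            (\<forall>i<m. diagonal_mat (transpose_mat P * A i * P)))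
     \<longleftrightarrow>
         (\<exists>\<epsilon> :: nat \<Rightarrow> 'a mat.
            (\<forall>j<n. \<epsilon> j \<in> center_mat n m A \<and> \<epsilon> j \<noteq> 0\<^sub>m n n \<and> \<epsilon> j * \<epsilon> j = \<epsilon> j) \<and>
            (\<forall>j<n. \<forall>l<n. j \<noteq> l \<longrightarrow> \<epsilon> j * \<epsilon> l = 0\<^sub>m n n) \<and>
            foldr (+) (map \<epsilon> [0..<n]) (0\<^sub>m n n) = 1\<^sub>m n)"
  using central_idempotents_if_congruence_diagonal[OF dims sym]
    congruence_diagonal_if_central_idempotents[OF dims sym]
  by blast

end
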